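(* Let $\Gamma$ be a $g\mathbf{PAI}$-theory. For all formulas $\varphi,\psi$: $[N(\varphi)]_{\sim_\Gamma}\le_\oplus[N(\psi)]_{\sim_\Gamma}$ in the quotient algebra $\langle N[Fm]/{\sim_\Gamma},\oplus\rangle$ if and only if $N(\varphi)\le_\Gamma N(\psi)$ (equivalently, iff $\varphi\prec\psi\in\Gamma$).
   Context: Language: fix a countable set $Var$ of variables; $Fm$ is the set of formulas built from $Var$ with unary $\neg,\Box$ and binary $\vee,\to$. Abbreviations: $\varphi\wedge\psi:=\neg(\neg\varphi\vee\neg\psi)$, $\varphi\supset\psi:=\neg\varphi\vee\psi$, $\varphi\equiv\psi:=(\varphi\supset\psi)\wedge(\psi\supset\varphi)$, $\varphi\prec\psi:=\psi\to(\varphi\vee\neg\varphi)$. $g\mathbf{PAI}$ is the Hilbert calculus with axiom schemes (A1) $\varphi\supset(\psi\supset\varphi)$; (A2) $(\varphi\supset(\psi\supset\chi))\supset((\varphi\supset\psi)\supset(\varphi\supset\chi))$; (A3) $(\neg\varphi\supset\neg\psi)\supset(\psi\supset\varphi)$; (A4) $(\varphi\to\psi)\equiv(\Box(\varphi\supset\psi)\wedge(\psi\prec\varphi))$; (A5) $((\varphi\to\psi)\prec(\varphi\vee\psi))\wedge((\varphi\vee\psi)\prec(\varphi\to\psi))$; (K) $\Box(\varphi\supset\psi)\supset(\Box\varphi\supset\Box\psi)$; (T) $\Box\varphi\supset\varphi$; (4) $\Box\varphi\supset\Box\Box\varphi$; (O1) $\varphi\prec\varphi$; (O2) $((\varphi\prec\psi)\wedge(\psi\prec\chi))\supset(\varphi\prec\chi)$;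 (O3) $(\varphi\prec\psi)\supset((\varphi\vee\psi)\prec\psi)$; (O4) $((\varphi\prec\psi)\equiv(\varphi\prec\neg\psi))\wedge((\varphi\prec\psi)\equiv(\neg\varphi\prec\psi))$; (O5) $((\varphi\prec\psi)\equiv(\varphi\prec\Box\psi))\wedge((\varphi\prec\psi)\equiv(\Box\varphi\prec\psi))$; (C1) $(\varphi\prec(\varphi\vee\psi))\wedge(\psi\prec(\varphi\vee\psi))$; (C2) $((\varphi\prec\chi)\wedge(\psi\prec\chi))\supset((\varphi\vee\psi)\prec\chi)$; (C3) $((\varphi\prec\chi)\wedge(\chi\prec\varphi)\wedge(\psi\prec\zeta)\wedge(\zeta\prec\psi))\supset((\varphi\to\psi)\prec(\chi\to\zeta))$; rules (MP) from $\varphi,\varphi\supset\psi$ infer $\psi$, (Nec$_g$) from $\varphi$ infer $\Box\varphi$. A $g\mathbf{PAI}$-theory is a set of formulas closed under derivability in this calculus. $N$ is the map from $Fm$ onto the algebra of terms over $Var$ in a binary symbol $\oplus$ given by $N(p)=p$, $N(\neg\varphi)=N(\Box\varphi)=N(\varphi)$, $N(\varphi\vee\psi)=N(\varphi\to\psi)=N(\varphi)\oplus N(\psi)$; $N[Fm]$ is its image. For a theory $\Gamma$ define on $N[Fm]$: $N(\varphi)\le_\Gamma N(\psi)$ iff $\varphi\prec\psi\in\Gamma$ (independent of the chosen preimages), and $N(\varphi)\sim_\Gamma N(\psi)$ iff $N(\varphi)\le_\Gamma N(\psi)$ and $N(\psi)\le_\Gamma N(\varphi)$; $\sim_\Gamma$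 is a congruence of $\langle N[Fm],\oplus\rangle$ and $\langle N[Fm]/{\sim_\Gamma},\oplus\rangle$ is the quotient. On the quotient, $x\le_\oplus y$ iff $x\oplus y=y$. *)

theory Defs
  imports Main
begin

text \<open>Formulas over a countable set of variables (here: nat), with unary
  negation and box, binary disjunction and the strict implication arrow.\<close>

datatype fm = Var nat | Neg fm | Box fm | Disj fm fm | Arr fm fm

definition Conj :: "fm \<Rightarrow> fm \<Rightarrow> fm" where
  "Conj a b = Neg (Disj (Neg a) (Neg b))"
definition Imp :: "fm \<Rightarrow> fm \<Rightarrow> fm" where
  "Imp a b = Disj (Neg a) b"
definition Equiv :: "fm \<Rightarrow> fm \<Rightarrow> fm" where
  "Equiv a b = Conj (Imp a b) (Imp b a)"
definition Prec :: "fm \<Rightarrow> fm \<Rightarrow> fm" where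
  "Prec a b = Arr b (Disj a (Neg a))"

inductive gPAI_ax :: "fm \<Rightarrow> bool" where
  A1: "gPAI_ax (Imp a (Imp b a))"
| A2: "gPAI_ax (Imp (Imp a (Imp b c)) (Imp (Imp a b) (Imp a c)))"
| A3: "gPAI_ax (Imp (Imp (Neg a) (Neg b)) (Imp b a))"
| A4: "gPAI_ax (Equiv (Arr a b) (Conj (Box (Imp a b)) (Prec b a)))"
| A5: "gPAI_ax (Conj (Prec (Arr a b) (Disj a b)) (Prec (Disj a b) (Arr a b)))"
| K: "gPAI_ax (Imp (Box (Imp a b)) (Imp (Box a) (Box b)))"
| T: "gPAI_ax (Imp (Box a) a)"
| Four: "gPAI_ax (Imp (Box a) (Box (Box a)))"
| O1: "gPAI_ax (Prec a a)"
| O2: "gPAI_ax (Imp (Conj (Prec a b) (Prec b c)) (Prec a c))"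
| O3: "gPAI_ax (Imp (Prec a b) (Prec (Disj a b) b))"
| O4: "gPAI_ax (Conj (Equiv (Prec a b) (Prec a (Neg b))) (Equiv (Prec a b) (Prec (Neg a) b)))"
| O5: "gPAI_ax (Conj (Equiv (Prec a b) (Prec a (Box b))) (Equiv (Prec a b) (Prec (Box a) b)))"
| C1: "gPAI_ax (Conj (Prec a (Disj a b)) (Prec b (Disj a b)))"
| C2: "gPAI_ax (Imp (Conj (Prec a c) (Prec b c)) (Prec (Disj a b) c))"
| C3: "gPAI_ax (Imp (Conj (Conj (Conj (Prec a c) (Prec c a)) (Prec b d)) (Prec d b))
                    (Prec (Arr a b) (Arr c d)))"

inductive gPAI_derives :: "fm set \<Rightarrow> fm \<Rightarrow> bool" where
  hyp: "a \<in> G \<Longrightarrow> gPAI_derives G a"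
| ax: "gPAI_ax a \<Longrightarrow> gPAI_derives G a"
| MP: "gPAI_derives G a \<Longrightarrow> gPAI_derives G (Imp a b) \<Longrightarrow> gPAI_derives G b"
| Nec: "gPAI_derives G a \<Longrightarrow> gPAI_derives G (Box a)"

definition gPAI_theory :: "fm set \<Rightarrow> bool" where
  "gPAI_theory G \<longleftrightarrow> (\<forall>a. gPAI_derives G a \<longrightarrow> a \<in> G)"

datatype trm = TVar nat | Oplus trm trm

fun N :: "fm \<Rightarrow> trm" where
  "N (Var p) = TVar p"
| "N (Neg a) = N a"
| "N (Box a) = N a"
| "N (Disj a b) = Oplus (N a) (N b)"
| "N (Arr a b) = Oplus (N a) (N b)"

definition NFm :: "trm set" where
  "NFm = range N"

text \<open>The preorder \<le>_\<Gamma> on N[Fm] (defined through preimages; the choice of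
  preimages is irrelevant by the paper's lemma) and the equivalence \<sim>_\<Gamma>.\<close>

definition le_G :: "fm set \<Rightarrow> trm \<Rightarrow> trm \<Rightarrow> bool" where
  "le_G G s t \<longleftrightarrow> (\<exists>a b. N a = s \<and> N b = t \<and> Prec a b \<in> G)"

definition sim_G :: "fm set \<Rightarrow> trm \<Rightarrow> trm \<Rightarrow> bool" where
  "sim_G G s t \<longleftrightarrow> le_G G s t \<and> le_G G t s"

definition cls :: "fm set \<Rightarrow> trm \<Rightarrow> trm set" where
  "cls G t = {s \<in> NFm. sim_G G s t}"

text \<open>The quotient operation: [s] \<oplus> [t] = [s \<oplus> t] (well defined since
  \<sim>_\<Gamma> is a congruence); implemented via representatives.\<close>

definition q_oplus :: "fm set \<Rightarrow> trm set \<Rightarrow> trm set \<Rightarrow> trm set" where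
  "q_oplus G X Y = cls G (Oplus (SOME s. s \<in> X) (SOME t. t \<in> Y))"

definition q_le :: "fm set \<Rightarrow> trm set \<Rightarrow> trm set \<Rightarrow> bool" where
  "q_le G X Y \<longleftrightarrow> q_oplus G X Y = Y"

end

theory Submission
  imports Defs
begin

text \<open>Every formula is \<open>\<prec>\<close>-equivalent in \<open>\<Gamma>\<close> to the pure disjunction formula read
  off its \<open>N\<close>-image: O4 and O5 strip negations and boxes, A5 turns arrows into
  disjunctions, and C1, C2, O2 make disjunction monotone. Hence \<open>\<le>\<^sub>\<Gamma>\<close> is simply
  \<open>\<prec>\<close>-membership and \<open>\<sim>\<^sub>\<Gamma>\<close> is a congruence, so
  \<open>[N \<phi>] \<le>\<^sub>\<oplus> [N \<psi>]\<close> says \<open>\<phi> \<or> \<psi> \<sim>\<^sub>\<Gamma> \<psi>\<close>. By C1, O3 and O2 this is equivalent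
  to \<open>\<phi> \<prec> \<psi> \<in> \<Gamma>\<close>.\<close>

text \<open>Dropping Nec keeps the deduction theorem valid; since a theory is closed
  under full derivability, this fragment suffices for the propositional reasoning.\<close>

inductive mp_derives :: "fm set \<Rightarrow> fm \<Rightarrow> bool" where
  hyp: "a \<in> H \<Longrightarrow> mp_derives H a"
| ax: "gPAI_ax a \<Longrightarrow> mp_derives H a"
| MP: "mp_derives H a \<Longrightarrow> mp_derives H (Imp a b) \<Longrightarrow> mp_derives H b"

lemma mp_derives_gPAI_derives: "mp_derives H a \<Longrightarrow> gPAI_derives H a"
  by (induction rule: mp_derives.induct) (auto intro: gPAI_derives.intros)

lemma mp_derives_mono: "mp_derives H a \<Longrightarrow> H \<subseteq> H' \<Longrightarrow> mp_derives H' a"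
  by (induction rule: mp_derives.induct) (auto intro: mp_derives.intros)

lemma mp_derives_Imp_const: "mp_derives H a \<Longrightarrow> mp_derives H (Imp b a)"
  by (rule mp_derives.MP[OF _ mp_derives.ax[OF A1]])

lemma mp_derives_Imp_self: "mp_derives H (Imp a a)"
proof -
  have "mp_derives H (Imp (Imp a (Imp (Imp a a) a)) (Imp (Imp a (Imp a a)) (Imp a a)))"
    by (intro mp_derives.ax A2)
  then have "mp_derives H (Imp (Imp a (Imp a a)) (Imp a a))"
    by (rule mp_derives.MP[rotated]) (intro mp_derives.ax A1)
  then show ?thesis
    by (rule mp_derives.MP[rotated]) (intro mp_derives.ax A1)
qed

lemma mp_derives_deduction: "mp_derives (insert a H) b \<Longrightarrow> mp_derives H (Imp a b)"
proof (induction "insert a H" b rule: mp_derives.induct)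
  case (hyp b)
  show ?case
  proof (cases "b = a")
    case True
    then show ?thesis by (simp add: mp_derives_Imp_self)
  next
    case False
    with hyp have "mp_derives H b" by (simp add: mp_derives.hyp)
    then show ?thesis by (rule mp_derives_Imp_const)
  qed
next
  case (ax b)
  then show ?case by (intro mp_derives_Imp_const mp_derives.ax)
next
  case (MP b c)
  have "mp_derives H (Imp (Imp a (Imp b c)) (Imp (Imp a b) (Imp a c)))"
    by (intro mp_derives.ax A2)
  then have "mp_derives H (Imp (Imp a b) (Imp a c))"
    using MP.hyps(4) by (rule mp_derives.MP[rotated])
  then show ?case
    using MP.hyps(2) by (rule mp_derives.MP[rotated])
qed

lemma mp_derives_insert: "mp_derives H b \<Longrightarrow> mp_derives (insert a H) b"
  by (erule mp_derives_mono) blast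

lemma mp_derives_by_contrapos:
  assumes "mp_derives H (Imp (Neg a) (Neg b))" and "mp_derives H b"
  shows "mp_derives H a"
  using assms(2) mp_derives.MP[OF assms(1) mp_derives.ax[OF A3]] by (rule mp_derives.MP)

lemma mp_derives_Neg_elim: "mp_derives H (Neg a) \<Longrightarrow> mp_derives H a \<Longrightarrow> mp_derives H b"
  by (rule mp_derives_by_contrapos[of _ b a]) (rule mp_derives_Imp_const)

lemma mp_derives_Neg_Neg_elim: "mp_derives H (Neg (Neg a)) \<Longrightarrow> mp_derives H a"
proof -
  assume nna: "mp_derives H (Neg (Neg a))"
  have "mp_derives H (Imp (Neg a) (Neg (Neg (Neg a))))"
  proof (rule mp_derives_deduction)
    show "mp_derives (insert (Neg a) H) (Neg (Neg (Neg a)))"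
      by (rule mp_derives_Neg_elim[of _ "Neg a"])
        (auto intro: mp_derives_insert[OF nna] mp_derives.hyp)
  qed
  then show ?thesis using nna by (rule mp_derives_by_contrapos)
qed

lemma mp_derives_Neg_Neg_hyp: "mp_derives (insert (Neg (Neg a)) H) a"
  by (rule mp_derives_Neg_Neg_elim, rule mp_derives.hyp) simp

lemma mp_derives_Neg_Neg_intro: "mp_derives H a \<Longrightarrow> mp_derives H (Neg (Neg a))"
proof (rule mp_derives_by_contrapos)
  show "mp_derives H (Imp (Neg (Neg (Neg a))) (Neg a))"
    by (rule mp_derives_deduction, rule mp_derives_Neg_Neg_hyp)
qed

lemma mp_derives_contrapos:
  "mp_derives H (Imp a b) \<Longrightarrow> mp_derives H (Imp (Neg b) (Neg a))"
proof -
  assume ab: "mp_derives H (Imp a b)"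
  have "mp_derives H (Imp (Neg (Neg a)) (Neg (Neg b)))"
  proof (rule mp_derives_deduction, rule mp_derives_Neg_Neg_intro)
    have "mp_derives (insert (Neg (Neg a)) H) a"
      by (rule mp_derives_Neg_Neg_hyp)
    then show "mp_derives (insert (Neg (Neg a)) H) b"
      using mp_derives_insert[OF ab] by (rule mp_derives.MP)
  qed
  then show ?thesis
    by (rule mp_derives.MP) (intro mp_derives.ax A3)
qed

lemma mp_derives_tollens:
  assumes "mp_derives H (Imp (Neg c) x)" and "mp_derives H (Neg x)"
  shows "mp_derives H c"
  by (rule mp_derives_Neg_Neg_elim, rule mp_derives.MP[OF assms(2)])
    (rule mp_derives_contrapos[OF assms(1)])

lemma Conj_eq_Neg_Imp: "Conj a b = Neg (Imp a (Neg b))"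
  by (simp add: Conj_def Imp_def)

lemma mp_derives_ConjD1: "mp_derives H (Conj a b) \<Longrightarrow> mp_derives H a"
  unfolding Conj_eq_Neg_Imp
proof (rule mp_derives_tollens)
  show "mp_derives H (Imp (Neg a) (Imp a (Neg b)))"
    by (rule mp_derives_deduction, rule mp_derives_deduction, rule mp_derives_Neg_elim[of _ a])
      (auto intro: mp_derives.hyp)
qed

lemma mp_derives_ConjD2: "mp_derives H (Conj a b) \<Longrightarrow> mp_derives H b"
  unfolding Conj_eq_Neg_Imp
proof (rule mp_derives_tollens)
  show "mp_derives H (Imp (Neg b) (Imp a (Neg b)))"
    by (intro mp_derives.ax A1)
qed

lemma mp_derives_ConjI:
  "mp_derives H a \<Longrightarrow> mp_derives H b \<Longrightarrow> mp_derives H (Conj a b)"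
proof -
  assume a: "mp_derives H a" and b: "mp_derives H b"
  let ?c = "Imp a (Neg b)"
  have "mp_derives H (Imp (Neg (Neg ?c)) (Neg b))"
  proof (rule mp_derives_deduction)
    have "mp_derives (insert (Neg (Neg ?c)) H) ?c"
      by (rule mp_derives_Neg_Neg_hyp)
    with mp_derives_insert[OF a] show "mp_derives (insert (Neg (Neg ?c)) H) (Neg b)"
      by (rule mp_derives.MP)
  qed
  then have "mp_derives H (Neg ?c)" using b by (rule mp_derives_by_contrapos)
  then show ?thesis unfolding Conj_eq_Neg_Imp .
qed

fun fm_of_trm :: "trm \<Rightarrow> fm" where
  "fm_of_trm (TVar p) = Var p"
| "fm_of_trm (Oplus s t) = Disj (fm_of_trm s) (fm_of_trm t)"

lemma N_fm_of_trm [simp]: "N (fm_of_trm t) = t"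
  by (induction t) auto

lemma NFm_eq_UNIV: "NFm = UNIV"
  unfolding NFm_def by (metis N_fm_of_trm surjI)

context
  fixes \<Gamma> :: "fm set"
  assumes Gamma_theory: "gPAI_theory \<Gamma>"
begin

lemma mem_if_mp_derives: "mp_derives \<Gamma> a \<Longrightarrow> a \<in> \<Gamma>"
  using Gamma_theory mp_derives_gPAI_derives unfolding gPAI_theory_def by blast

lemma ax_mem: "gPAI_ax a \<Longrightarrow> a \<in> \<Gamma>"
  by (intro mem_if_mp_derives mp_derives.ax)

lemma MP_mem: "a \<in> \<Gamma> \<Longrightarrow> Imp a b \<in> \<Gamma> \<Longrightarrow> b \<in> \<Gamma>"
  by (blast intro: mem_if_mp_derives mp_derives.MP mp_derives.hyp)

lemma Conj_mem_iff: "Conj a b \<in> \<Gamma> \<longleftrightarrow> a \<in> \<Gamma> \<and> b \<in> \<Gamma>"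
  by (meson mem_if_mp_derives mp_derives.hyp mp_derives_ConjD1 mp_derives_ConjD2 mp_derives_ConjI)

lemma Equiv_memD: "Equiv a b \<in> \<Gamma> \<Longrightarrow> a \<in> \<Gamma> \<longleftrightarrow> b \<in> \<Gamma>"
  unfolding Equiv_def using Conj_mem_iff MP_mem by blast

lemma Prec_refl: "Prec a a \<in> \<Gamma>"
  by (intro ax_mem O1)

lemma Prec_trans: "Prec a b \<in> \<Gamma> \<Longrightarrow> Prec b c \<in> \<Gamma> \<Longrightarrow> Prec a c \<in> \<Gamma>"
  using MP_mem[OF _ ax_mem[OF O2]] Conj_mem_iff by blast

lemma Prec_Neg_iff:
  shows "Prec (Neg a) b \<in> \<Gamma> \<longleftrightarrow> Prec a b \<in> \<Gamma>"
    and "Prec a (Neg b) \<in> \<Gamma> \<longleftrightarrow> Prec a b \<in> \<Gamma>"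
  using ax_mem[OF O4, of a b] Conj_mem_iff Equiv_memD by blast+

lemma Prec_Box_iff:
  shows "Prec (Box a) b \<in> \<Gamma> \<longleftrightarrow> Prec a b \<in> \<Gamma>"
    and "Prec a (Box b) \<in> \<Gamma> \<longleftrightarrow> Prec a b \<in> \<Gamma>"
  using ax_mem[OF O5, of a b] Conj_mem_iff Equiv_memD by blast+

lemma Prec_Disj_upper:
  shows "Prec a (Disj a b) \<in> \<Gamma>" and "Prec b (Disj a b) \<in> \<Gamma>"
  using ax_mem[OF C1, of a b] Conj_mem_iff by blast+

lemma Prec_Disj_least: "Prec a c \<in> \<Gamma> \<Longrightarrow> Prec b c \<in> \<Gamma> \<Longrightarrow> Prec (Disj a b) c \<in> \<Gamma>"
  using MP_mem[OF _ ax_mem[OF C2]] Conj_mem_iff by blast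

lemma Prec_Disj_absorb: "Prec a b \<in> \<Gamma> \<Longrightarrow> Prec (Disj a b) b \<in> \<Gamma>"
  using MP_mem[OF _ ax_mem[OF O3]] by blast

lemma Prec_Arr_Disj:
  shows "Prec (Arr a b) (Disj a b) \<in> \<Gamma>" and "Prec (Disj a b) (Arr a b) \<in> \<Gamma>"
  using ax_mem[OF A5, of a b] Conj_mem_iff by blast+

lemma Prec_Disj_mono:
  "Prec a c \<in> \<Gamma> \<Longrightarrow> Prec b d \<in> \<Gamma> \<Longrightarrow> Prec (Disj a b) (Disj c d) \<in> \<Gamma>"
  by (meson Prec_Disj_upper Prec_Disj_least Prec_trans)

lemma Prec_fm_of_trm_N: "Prec a (fm_of_trm (N a)) \<in> \<Gamma> \<and> Prec (fm_of_trm (N a)) a \<in> \<Gamma>"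
proof (induction a)
  case (Var p)
  then show ?case using Prec_refl by simp
next
  case (Neg a)
  then show ?case by (simp add: Prec_Neg_iff)
next
  case (Box a)
  then show ?case by (simp add: Prec_Box_iff)
next
  case (Disj a b)
  then show ?case by (simp add: Prec_Disj_mono)
next
  case (Arr a b)
  then show ?case using Prec_Disj_mono Prec_Arr_Disj Prec_trans by simp meson
qed

lemma Prec_if_N_eq: "N a = N b \<Longrightarrow> Prec a b \<in> \<Gamma>"
  by (metis Prec_fm_of_trm_N Prec_trans)

lemma le_G_N_iff: "le_G \<Gamma> (N a) (N b) \<longleftrightarrow> Prec a b \<in> \<Gamma>"
  unfolding le_G_def by (metis Prec_if_N_eq Prec_trans)

lemma sim_G_N_iff: "sim_G \<Gamma> (N a) (N b) \<longleftrightarrow> Prec a b \<in> \<Gamma> \<and> Prec b a \<in> \<Gamma>"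
  unfolding sim_G_def le_G_N_iff ..

lemma sim_G_iff: "sim_G \<Gamma> s t \<longleftrightarrow> Prec (fm_of_trm s) (fm_of_trm t) \<in> \<Gamma> \<and> Prec (fm_of_trm t) (fm_of_trm s) \<in> \<Gamma>"
  using sim_G_N_iff[of "fm_of_trm s" "fm_of_trm t"] by simp

lemma equivp_sim_G: "equivp (sim_G \<Gamma>)"
  by (rule equivpI; unfold reflp_def symp_def transp_def sim_G_iff)
    (blast intro: Prec_refl Prec_trans)+

lemma cls_eq_iff: "cls \<Gamma> s = cls \<Gamma> t \<longleftrightarrow> sim_G \<Gamma> s t"
proof -
  have "cls \<Gamma> u = Collect (sim_G \<Gamma> u)" for u
    using equivp_symp[OF equivp_sim_G] by (auto simp: cls_def NFm_eq_UNIV)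
  then have "cls \<Gamma> s = cls \<Gamma> t \<longleftrightarrow> sim_G \<Gamma> s = sim_G \<Gamma> t"
    by (simp add: set_eq_iff fun_eq_iff)
  also have "\<dots> \<longleftrightarrow> sim_G \<Gamma> s t"
    by (metis equivp_def equivp_sim_G)
  finally show ?thesis .
qed

lemma sim_G_Oplus:
  "sim_G \<Gamma> s s' \<Longrightarrow> sim_G \<Gamma> t t' \<Longrightarrow> sim_G \<Gamma> (Oplus s t) (Oplus s' t')"
  unfolding sim_G_iff by (simp add: Prec_Disj_mono)

lemma q_oplus_cls: "q_oplus \<Gamma> (cls \<Gamma> s) (cls \<Gamma> t) = cls \<Gamma> (Oplus s t)"
proof -
  have mem_cls: "u \<in> cls \<Gamma> u" for u
    using equivp_reflp[OF equivp_sim_G] by (simp add: cls_def NFm_eq_UNIV)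
  have "(SOME x. x \<in> cls \<Gamma> u) \<in> cls \<Gamma> u" for u
    using mem_cls by (rule someI)
  then have "sim_G \<Gamma> (SOME x. x \<in> cls \<Gamma> u) u" for u
    by (simp add: cls_def)
  then show ?thesis
    unfolding q_oplus_def cls_eq_iff by (intro sim_G_Oplus)
qed

lemma Prec_Disj_absorb_iff:
  "Prec (Disj a b) b \<in> \<Gamma> \<and> Prec b (Disj a b) \<in> \<Gamma> \<longleftrightarrow> Prec a b \<in> \<Gamma>"
  using Prec_Disj_upper Prec_Disj_absorb Prec_trans by blast

end

theorem mainTheorem12:
  assumes "gPAI_theory \<Gamma>"
  shows "(q_le \<Gamma> (cls \<Gamma> (N \<phi>)) (cls \<Gamma> (N \<psi>)) \<longleftrightarrow> le_G \<Gamma> (N \<phi>) (N \<psi>))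
       \<and> (q_le \<Gamma> (cls \<Gamma> (N \<phi>)) (cls \<Gamma> (N \<psi>)) \<longleftrightarrow> Prec \<phi> \<psi> \<in> \<Gamma>)"
proof -
  have "q_le \<Gamma> (cls \<Gamma> (N \<phi>)) (cls \<Gamma> (N \<psi>)) \<longleftrightarrow> sim_G \<Gamma> (N (Disj \<phi> \<psi>)) (N \<psi>)"
    unfolding q_le_def q_oplus_cls[OF assms] cls_eq_iff[OF assms] by simp
  also have "\<dots> \<longleftrightarrow> Prec \<phi> \<psi> \<in> \<Gamma>"
    unfolding sim_G_N_iff[OF assms] Prec_Disj_absorb_iff[OF assms] ..
  finally show ?thesis
    using le_G_N_iff[OF assms] by simp
qed

end
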